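(* Assume $\mathcal A$ is closed and star shaped, $\mathcal P$ is closed and star shaped, and $V_0$ is lower semicontinuous and star shaped. Then for every scalable acceptable deal $x\in\mathbb R^N$ and every $\lambda>0$ we have $\lambda x\in\mathcal P$, $V_0(\lambda x)\le0$ and $\lambda V_1(x)\in\mathcal A$. In particular, every scalable acceptable deal is an acceptable deal.
   Context: Standing setup: Let $\mathcal{X}$ be a real topological vector space partially ordered by a convex cone $\mathcal{X}_+\subset\mathcal X$; write $X\ge Y$ iff $X-Y\in\mathcal X_+$. Fix $N\in\mathbb N$ and: a set $\mathcal P\subset\mathbb R^N$ with $0\in\mathcal P$; a function $V_0:\mathbb R^N\to\mathbb R$ with $V_0(0)=0$ and $V_0(x)\ge -V_0(-x)$ for all $x\in\mathbb R^N$; a map $V_1:\mathbb R^N\to\mathcal X$ with $V_1(0)=0$ and $V_1(x)\le -V_1(-x)$ for all $x\in\mathbb R^N$; a set $\mathcal A\subset\mathcal X$ with $0\in\mathcal A$ and $\mathcal A+\mathcal X_+\subset\mathcal A$. A set $C$ is star shaped if $\lambda C\subset C$ for all $\lambda\in[0,1]$; a function $f$ is star shaped if $f(\lambda x)\le\lambda f(x)$ for all $\lambda\in[0,1]$. Asymptotic notions: for a nonempty set $C$ in a topological vector space, $C^\infty=\{X:\exists\text{ nets }(X_\alpha)\subset C,\ (\lambda_\alpha)\subset[0,\infty),\ \lambda_\alpha\to0,\ \lambda_\alpha X_\alpha\to X\}$. For $f:\mathbb R^N\to\mathbb R$, its asymptotic function $f^\infty:\mathbb R^N\to[-\infty,\infty]$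 is the function whose epigraph $\{(x,m)\in\mathbb R^N\times\mathbb R: f^\infty(x)\le m\}$ equals $(\operatorname{epi}f)^\infty$, where $\operatorname{epi}f=\{(x,m)\in\mathbb R^N\times\mathbb R: f(x)\le m\}$. A portfolio $x\in\mathbb R^N$ is an acceptable deal if $x\in\mathcal P$, $V_0(x)\le0$ and $V_1(x)\in\mathcal A\setminus\{0\}$; it is a scalable acceptable deal if $x\in\mathcal P^\infty$, $V_0^\infty(x)\le0$ and $V_1(x)\in\mathcal A^\infty\setminus\{0\}$. *)

theory Defs
  imports "HOL-Analysis.Analysis"
begin

definition star_shaped_set :: "'a::real_vector set \<Rightarrow> bool" where
  "star_shaped_set C \<longleftrightarrow> (\<forall>l::real. 0 \<le> l \<and> l \<le> 1 \<longrightarrow> (\<lambda>x. l *\<^sub>R x) ` C \<subseteq> C)"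

definition star_shaped_fun :: "('a::real_vector \<Rightarrow> real) \<Rightarrow> bool" where
  "star_shaped_fun f \<longleftrightarrow> (\<forall>l::real. \<forall>x. 0 \<le> l \<and> l \<le> 1 \<longrightarrow> f (l *\<^sub>R x) \<le> l * f x)"

definition lsc :: "('a::topological_space \<Rightarrow> real) \<Rightarrow> bool" where
  "lsc f \<longleftrightarrow> (\<forall>c. closed {x. f x \<le> c})"

text \<open>Asymptotic cone. Nets are represented by (proper) filters: a net
  \<open>(X_\<alpha>, \<lambda>_\<alpha>)\<close> corresponds to the image of its tail filter on pairs.\<close>
definition asym_cone :: "'a::{real_vector,topological_space} set \<Rightarrow> 'a set" where
  "asym_cone C = {X. \<exists>F :: ('a \<times> real) filter. F \<noteq> bot \<and>
      eventually (\<lambda>p. fst p \<in> C \<and> 0 \<le> snd p) F \<and>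
      ((\<lambda>p. snd p) \<longlongrightarrow> 0) F \<and>
      ((\<lambda>p. snd p *\<^sub>R fst p) \<longlongrightarrow> X) F}"

definition epi :: "('a \<Rightarrow> real) \<Rightarrow> ('a \<times> real) set" where
  "epi f = {(x, m). f x \<le> m}"

definition asym_fun :: "('a::{real_vector,topological_space} \<Rightarrow> real) \<Rightarrow> 'a \<Rightarrow> ereal" where
  "asym_fun f x = Inf {ereal m | m. (x, m) \<in> asym_cone (epi f)}"

definition acceptable_deal ::
  "(real^'n) set \<Rightarrow> (real^'n \<Rightarrow> real) \<Rightarrow> (real^'n \<Rightarrow> 'x::real_vector)
     \<Rightarrow> 'x set \<Rightarrow> real^'n \<Rightarrow> bool" where
  "acceptable_deal P V0 V1 A x \<longleftrightarrow> x \<in> P \<and> V0 x \<le> 0 \<and> V1 x \<in> A - {0}"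

definition scalable_acceptable_deal ::
  "(real^'n) set \<Rightarrow> (real^'n \<Rightarrow> real) \<Rightarrow> (real^'n \<Rightarrow> 'x::{real_vector,topological_space})
     \<Rightarrow> 'x set \<Rightarrow> real^'n \<Rightarrow> bool" where
  "scalable_acceptable_deal P V0 V1 A x \<longleftrightarrow>
     x \<in> asym_cone P \<and> asym_fun V0 x \<le> 0 \<and> V1 x \<in> asym_cone A - {0}"

end

theory Submission
  imports Defs
begin

text \<open>If \<open>\<lambda>\<^sub>\<alpha> X\<^sub>\<alpha> \<rightarrow> X\<close> with \<open>X\<^sub>\<alpha> \<in> C\<close> and \<open>\<lambda>\<^sub>\<alpha> \<rightarrow> 0\<close>, then for fixed \<open>t > 0\<close> eventually
  \<open>t \<lambda>\<^sub>\<alpha> \<le> 1\<close>, so star-shapedness puts \<open>(t \<lambda>\<^sub>\<alpha>) X\<^sub>\<alpha>\<close> in \<open>C\<close>, and closedness puts the limit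
  \<open>t X\<close> in \<open>C\<close>. The epigraph of a lower semicontinuous star shaped function is closed and
  star shaped, which gives the statement for \<open>V\<^sub>0\<close> up to an arbitrary \<open>\<epsilon> > 0\<close>.
  Only closedness and star-shapedness (and continuity of scalar multiplication) are needed.\<close>

lemma scaleR_mem_of_asym_cone:
  fixes C :: "'a::{real_vector,topological_space} set"
  assumes scaleR_cont: "continuous_on UNIV (\<lambda>p::real \<times> 'a. fst p *\<^sub>R snd p)"
    and "closed C" and C_star: "star_shaped_set C"
    and "X \<in> asym_cone C" and t: "t > 0"
  shows "t *\<^sub>R X \<in> C"
proof -
  from \<open>X \<in> asym_cone C\<close> obtain F :: "('a \<times> real) filter" where
    F: "F \<noteq> bot" "eventually (\<lambda>p. fst p \<in> C \<and> 0 \<le> snd p) F"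
    and lim_scale: "((\<lambda>p. snd p) \<longlongrightarrow> 0) F"
    and lim: "((\<lambda>p. snd p *\<^sub>R fst p) \<longlongrightarrow> X) F"
    unfolding asym_cone_def by blast
  have small: "eventually (\<lambda>p. snd p < 1 / t) F"
    using order_tendstoD(2)[OF lim_scale, of "1/t"] t by simp
  have "((\<lambda>p. (t, snd p *\<^sub>R fst p)) \<longlongrightarrow> (t, X)) F"
    by (intro tendsto_Pair tendsto_const lim)
  from continuous_on_tendsto_compose[OF scaleR_cont this]
  have lim_t: "((\<lambda>p. (t * snd p) *\<^sub>R fst p) \<longlongrightarrow> t *\<^sub>R X) F"
    by (simp add: o_def)
  have "eventually (\<lambda>p. (t * snd p) *\<^sub>R fst p \<in> C) F"
    using small F(2)
  proof eventually_elim
    case (elim p)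
    then have "0 \<le> t * snd p" "t * snd p \<le> 1"
      using t by (simp_all add: field_simps)
    then show ?case
      using C_star elim unfolding star_shaped_set_def by blast
  qed
  then show ?thesis
    using Lim_in_closed_set[OF \<open>closed C\<close> _ F(1) lim_t] by blast
qed

lemma closed_epi:
  fixes f :: "'a::topological_space \<Rightarrow> real"
  assumes "lsc f"
  shows "closed (epi f)"
proof -
  have "open (- epi f)"
  proof (rule open_prod_intro)
    fix z assume "z \<in> - epi f"
    then obtain x m where z: "z = (x, m)" "f x > m"
      by (cases z) (auto simp: epi_def)
    define c where "c = (m + f x) / 2"
    have "open (- {y. f y \<le> c})"
      using assms unfolding lsc_def by auto
    moreover have "z \<in> (- {y. f y \<le> c}) \<times> {..<c}" "(- {y. f y \<le> c}) \<times> {..<c} \<subseteq> - epi f"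
      using z by (auto simp: c_def epi_def)
    ultimately show "\<exists>U V. open U \<and> open V \<and> z \<in> U \<times> V \<and> U \<times> V \<subseteq> - epi f"
      by (meson open_lessThan)
  qed
  then show ?thesis
    by (simp add: closed_def)
qed

lemma star_shaped_set_epi:
  assumes "star_shaped_fun f"
  shows "star_shaped_set (epi f)"
  unfolding star_shaped_set_def epi_def
proof (intro allI impI subsetI)
  fix l :: real and z
  assume l: "0 \<le> l \<and> l \<le> 1" and "z \<in> (\<lambda>x. l *\<^sub>R x) ` {(x, m). f x \<le> m}"
  then obtain x m where z: "z = (l *\<^sub>R x, l * m)" "f x \<le> m"
    by (auto simp: image_iff)
  have "f (l *\<^sub>R x) \<le> l * f x"
    using assms l unfolding star_shaped_fun_def by blast
  also have "\<dots> \<le> l * m"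
    using z l by (simp add: mult_left_mono)
  finally show "z \<in> {(x, m). f x \<le> m}"
    using z by simp
qed

lemma scaled_nonpos_of_asym_fun_nonpos:
  fixes f :: "'a::real_normed_vector \<Rightarrow> real"
  assumes "lsc f" and "star_shaped_fun f"
    and "asym_fun f x \<le> 0" and t: "t > 0"
  shows "f (t *\<^sub>R x) \<le> 0"
proof (rule field_le_epsilon)
  fix e :: real assume "e > 0"
  then have "Inf {ereal m | m. (x, m) \<in> asym_cone (epi f)} < ereal (e / t)"
    using \<open>asym_fun f x \<le> 0\<close> t unfolding asym_fun_def by (simp add: le_less_trans)
  then obtain m where m: "(x, m) \<in> asym_cone (epi f)" "m < e / t"
    by (auto simp: Inf_less_iff)
  have "continuous_on UNIV (\<lambda>p::real \<times> ('a \<times> real). fst p *\<^sub>R snd p)"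
    by (intro continuous_intros)
  then have "t *\<^sub>R (x, m) \<in> epi f"
    using scaleR_mem_of_asym_cone closed_epi star_shaped_set_epi assms m(1) by blast
  then have "f (t *\<^sub>R x) \<le> t * m"
    by (simp add: epi_def)
  also have "\<dots> \<le> e"
    using m t by (simp add: field_simps)
  finally show "f (t *\<^sub>R x) \<le> 0 + e"
    by simp
qed

theorem mainTheorem6:
  fixes Xplus :: "'x::{real_vector,topological_space} set"
    and P :: "(real^'n) set"
    and V0 :: "real^'n \<Rightarrow> real"
    and V1 :: "real^'n \<Rightarrow> 'x"
    and A :: "'x set"
  assumes tvs_add: "continuous_on UNIV (\<lambda>p::'x \<times> 'x. fst p + snd p)"
    and tvs_scale: "continuous_on UNIV (\<lambda>p::real \<times> 'x. fst p *\<^sub>R snd p)"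
    and cone: "convex_cone Xplus"
    and P0: "0 \<in> P"
    and V0_0: "V0 0 = 0"
    and V0_sym: "\<And>x. V0 x \<ge> - V0 (- x)"
    and V1_0: "V1 0 = 0"
    and V1_sym: "\<And>x. (- V1 (- x)) - V1 x \<in> Xplus"
    and A0: "0 \<in> A"
    and A_mono: "\<And>a c. a \<in> A \<Longrightarrow> c \<in> Xplus \<Longrightarrow> a + c \<in> A"
    and A_closed: "closed A" and A_star: "star_shaped_set A"
    and P_closed: "closed P" and P_star: "star_shaped_set P"
    and V0_lsc: "lsc V0" and V0_star: "star_shaped_fun V0"
  shows "\<forall>x. scalable_acceptable_deal P V0 V1 A x \<longrightarrow>
           (\<forall>l::real. l > 0 \<longrightarrow> l *\<^sub>R x \<in> P \<and> V0 (l *\<^sub>R x) \<le> 0 \<and> l *\<^sub>R V1 x \<in> A)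
           \<and> acceptable_deal P V0 V1 A x"
proof (intro allI impI)
  fix x assume "scalable_acceptable_deal P V0 V1 A x"
  then have x: "x \<in> asym_cone P" "asym_fun V0 x \<le> 0" "V1 x \<in> asym_cone A" "V1 x \<noteq> 0"
    unfolding scalable_acceptable_deal_def by auto
  have "continuous_on UNIV (\<lambda>p::real \<times> (real^'n). fst p *\<^sub>R snd p)"
    by (intro continuous_intros)
  then have scaled: "\<forall>l::real. l > 0 \<longrightarrow> l *\<^sub>R x \<in> P \<and> V0 (l *\<^sub>R x) \<le> 0 \<and> l *\<^sub>R V1 x \<in> A"
    using x scaleR_mem_of_asym_cone[OF _ P_closed P_star] scaleR_mem_of_asym_cone[OF tvs_scale A_closed A_star]
      scaled_nonpos_of_asym_fun_nonpos[OF V0_lsc V0_star] by blast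
  then have "acceptable_deal P V0 V1 A x"
    using x(4) spec[OF scaled, of 1] unfolding acceptable_deal_def by simp
  with scaled show "(\<forall>l::real. l > 0 \<longrightarrow> l *\<^sub>R x \<in> P \<and> V0 (l *\<^sub>R x) \<le> 0 \<and> l *\<^sub>R V1 x \<in> A)
           \<and> acceptable_deal P V0 V1 A x"
    by blast
qed

end
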